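(* Let $q$ be a prime power and let $\mathcal W(5,q)$ be the symplectic polar space of ${\rm PG}(5,q)$ defined by the alternating form with Gram matrix $\begin{pmatrix} 0_3 & I_3\\ -I_3 & 0_3\end{pmatrix}$. Let $\Pi_1=\langle U_4,U_5,U_6\rangle$, $\Pi_2=\langle U_1,U_2,U_3\rangle$, and let $\Pi_3$ be a plane of $\mathcal W(5,q)$ (a generator) disjoint from both $\Pi_1$ and $\Pi_2$. Then all $q+1$ planes of the Segre variety $\Sigma_{1,2}$ of ${\rm PG}(5,q)$ determined by $\Pi_1,\Pi_2,\Pi_3$ are generators of $\mathcal W(5,q)$.
   Context: $U_i$ is the point with $1$ in position $i$ and $0$ elsewhere. The Segre variety $\Sigma_{1,2}\subset{\rm PG}(5,q)$ is the image of ${\rm PG}(1,q)\times{\rm PG}(2,q)$ under $((x_1,x_2),(y_1,y_2,y_3))\mapsto(x_iy_j)$; it contains a ruling of $q+1$ pairwise disjoint planes, and three mutually disjoint planes of ${\rm PG}(5,q)$ lie in the plane ruling of a unique such Segre variety, which is the one "determined" by them; the "$q+1$ planes of $\Sigma_{1,2}$" are the planes of this ruling. *)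

theory Defs
  imports Main
begin

text \<open>Vectors of the underlying vector space F^6 of PG(5,q), F = GF(q), are modelled
as functions nat => F vanishing from index 6 on; coordinate i-1 is the paper's i-th
coordinate (so U_i corresponds to index i-1).  Projective subspaces are modelled by
the corresponding vector subspaces.\<close>

definition vecs :: "nat \<Rightarrow> (nat \<Rightarrow> 'a::zero) set" where
  "vecs n = {v. \<forall>i\<ge>n. v i = 0}"

definition lin3 :: "'a::comm_ring_1 \<Rightarrow> 'a \<Rightarrow> 'a \<Rightarrow> (nat \<Rightarrow> 'a) \<Rightarrow> (nat \<Rightarrow> 'a) \<Rightarrow> (nat \<Rightarrow> 'a) \<Rightarrow> (nat \<Rightarrow> 'a)" where
  "lin3 a b c u v w = (\<lambda>i. a * u i + b * v i + c * w i)"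

definition is_plane :: "(nat \<Rightarrow> 'a::field) set \<Rightarrow> bool" where
  "is_plane P \<longleftrightarrow> (\<exists>u v w. u \<in> vecs 6 \<and> v \<in> vecs 6 \<and> w \<in> vecs 6 \<and>
      (\<forall>a b c. lin3 a b c u v w = (\<lambda>_. 0) \<longrightarrow> a = 0 \<and> b = 0 \<and> c = 0) \<and>
      P = {lin3 a b c u v w | a b c. True})"

definition disjoint_sub :: "(nat \<Rightarrow> 'a::zero) set \<Rightarrow> (nat \<Rightarrow> 'a) set \<Rightarrow> bool" where
  "disjoint_sub P Q \<longleftrightarrow> P \<inter> Q = {\<lambda>_. 0}"

definition symp :: "(nat \<Rightarrow> 'a::comm_ring_1) \<Rightarrow> (nat \<Rightarrow> 'a) \<Rightarrow> 'a" where
  "symp x y = (\<Sum>i<3. x i * y (i + 3) - x (i + 3) * y i)"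

definition W5_generator :: "(nat \<Rightarrow> 'a::field) set \<Rightarrow> bool" where
  "W5_generator P \<longleftrightarrow> is_plane P \<and> (\<forall>x\<in>P. \<forall>y\<in>P. symp x y = 0)"

definition mat_app :: "(nat \<Rightarrow> nat \<Rightarrow> 'a::comm_ring_1) \<Rightarrow> (nat \<Rightarrow> 'a) \<Rightarrow> (nat \<Rightarrow> 'a)" where
  "mat_app M v = (\<lambda>i. if i < 6 then (\<Sum>j<6. M i j * v j) else 0)"

definition nonsingular :: "(nat \<Rightarrow> nat \<Rightarrow> 'a::comm_ring_1) \<Rightarrow> bool" where
  "nonsingular M \<longleftrightarrow> inj_on (mat_app M) (vecs 6)"

text \<open>Segre embedding of PG(1,q) x PG(2,q):
  ((x1,x2),(y1,y2,y3)) |-> (x1y1,x1y2,x1y3,x2y1,x2y2,x2y3).\<close>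
definition segre_vec :: "'a::comm_ring_1 \<Rightarrow> 'a \<Rightarrow> (nat \<Rightarrow> 'a) \<Rightarrow> (nat \<Rightarrow> 'a)" where
  "segre_vec x1 x2 y = (\<lambda>i. if i < 3 then x1 * y i else if i < 6 then x2 * y (i - 3) else 0)"

text \<open>Plane ruling of the Segre variety Sigma_{1,2} obtained as the image of the
standard one under the collineation induced by a nonsingular matrix M: the planes
image of {(x1,x2)} x PG(2,q).\<close>
definition segre_planes :: "(nat \<Rightarrow> nat \<Rightarrow> 'a::field) \<Rightarrow> (nat \<Rightarrow> 'a) set set" where
  "segre_planes M = {{mat_app M (segre_vec x1 x2 y) | y. y \<in> vecs 3} | x1 x2. (x1, x2) \<noteq> (0, 0)}"

end

theory Submission
  imports Defs
begin

text \<open>The planes of the ruling are the images under M of the planes {(d1, d2)} x PG(2,q).  For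
two fixed points y, z of PG(2,q), the symplectic form evaluated at the images of ((d1, d2), y) and
((d1, d2), z) is a binary quadratic form in (d1, d2).  Three distinct totally isotropic planes of
the ruling give three pairwise non-proportional zeros of it, so it vanishes identically and every
plane of the ruling is totally isotropic.

For existence, let u, v, w span Pi3 and let M be the block-diagonal matrix whose blocks are the
upper and lower halves of u, v, w.  Its ruling contains Pi3 and the projections of Pi3 onto Pi2
and Pi1; these projections are injective because Pi3 is disjoint from Pi1 and Pi2, hence onto
over a finite field.\<close>

lemma symp_lincomb:
  "symp (\<lambda>i. a * x i + b * y i) (\<lambda>i. c * z i + d * w i :: 'a::comm_ring_1) =
     a * c * symp x z + a * d * symp x w + b * c * symp y z + b * d * symp y w"
  by (simp add: symp_def eval_nat_numeral algebra_simps)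

lemma mat_app_lincomb:
  "mat_app M (\<lambda>i. a * x i + b * y i) = (\<lambda>i. a * mat_app M x i + b * mat_app M y i)"
  by (rule ext) (simp add: mat_app_def sum.distrib sum_distrib_left algebra_simps)

lemma mat_app_lin3: "mat_app M (lin3 a b c x y z) = lin3 a b c (mat_app M x) (mat_app M y) (mat_app M z)"
  by (rule ext) (simp add: mat_app_def lin3_def sum.distrib sum_distrib_left algebra_simps)

lemma mat_app_zero: "mat_app M (\<lambda>_. 0) = (\<lambda>_. 0)"
  by (rule ext) (simp add: mat_app_def)

lemma mat_app_in_vecs: "mat_app M x \<in> vecs 6"
  by (simp add: mat_app_def vecs_def)

lemma segre_vec_lin3:
  "segre_vec d1 d2 (lin3 a b c x y z) = lin3 a b c (segre_vec d1 d2 x) (segre_vec d1 d2 y) (segre_vec d1 d2 z)"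
  by (rule ext) (simp add: segre_vec_def lin3_def algebra_simps)

lemma segre_vec_in_vecs: "segre_vec d1 d2 x \<in> vecs 6"
  by (simp add: segre_vec_def vecs_def)

lemma segre_vec_split: "segre_vec d1 d2 y = (\<lambda>i. d1 * segre_vec 1 0 y i + d2 * segre_vec 0 1 y i)"
  by (rule ext) (simp add: segre_vec_def)

lemma lin3_in_vecs: "x \<in> vecs n \<Longrightarrow> y \<in> vecs n \<Longrightarrow> z \<in> vecs n \<Longrightarrow> lin3 a b c x y z \<in> vecs n"
  by (simp add: lin3_def vecs_def)

lemma lin3_diff: "(\<lambda>i. lin3 a b c x y z i - lin3 a' b' c' x y z i) = lin3 (a - a') (b - b') (c - c') x y z"
  by (rule ext) (simp add: lin3_def algebra_simps)

definition unit_vec :: "nat \<Rightarrow> nat \<Rightarrow> 'a::zero_neq_one" where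
  "unit_vec k = (\<lambda>i. if i = k then 1 else 0)"

lemma unit_vec_in_vecs: "k < n \<Longrightarrow> unit_vec k \<in> vecs n"
  by (simp add: unit_vec_def vecs_def)

lemma vecs_eq_lin3_units:
  assumes "x \<in> vecs n" "distinct [i, j, k]" "\<And>l. l < n \<Longrightarrow> l \<notin> {i, j, k} \<Longrightarrow> x l = 0"
  shows "x = lin3 (x i) (x j) (x k) (unit_vec i) (unit_vec j) (unit_vec k)"
proof
  fix l show "x l = lin3 (x i) (x j) (x k) (unit_vec i) (unit_vec j) (unit_vec k) l"
    using assms by (cases "l < n") (auto simp: lin3_def unit_vec_def vecs_def)
qed

lemma vecs3_eq_span_units:
  "vecs 3 = {lin3 a b c (unit_vec 0) (unit_vec 1) (unit_vec 2) | a b c :: 'a::comm_ring_1. True}"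
proof (intro equalityI subsetI)
  fix y :: "nat \<Rightarrow> 'a" assume "y \<in> vecs 3"
  then have "y = lin3 (y 0) (y 1) (y 2) (unit_vec 0) (unit_vec 1) (unit_vec 2)"
    by (rule vecs_eq_lin3_units) auto
  then show "y \<in> {lin3 a b c (unit_vec 0) (unit_vec 1) (unit_vec 2) | a b c. True}"
    by blast
qed (auto intro!: lin3_in_vecs unit_vec_in_vecs)

lemma vecs_coords_eq:
  "{f (y 0) (y 1) (y 2) | y. y \<in> vecs 3} = {f a b c | a b c. True}"
proof (intro equalityI subsetI)
  fix x assume "x \<in> {f a b c | a b c. True}"
  then obtain a b c where x: "x = f a b c"
    by blast
  let ?y = "\<lambda>i::nat. if i = 0 then a else if i = 1 then b else if i = 2 then c else 0"
  have "?y \<in> vecs 3"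
    by (simp add: vecs_def)
  with x show "x \<in> {f (y 0) (y 1) (y 2) | y. y \<in> vecs 3}"
    by force
qed blast

lemma image_vecs3_eq_span:
  fixes g :: "(nat \<Rightarrow> 'a::comm_ring_1) \<Rightarrow> nat \<Rightarrow> 'a"
  assumes "\<And>a b c x y z. g (lin3 a b c x y z) = lin3 a b c (g x) (g y) (g z)"
  shows "g ` vecs 3 = {lin3 a b c (g (unit_vec 0)) (g (unit_vec 1)) (g (unit_vec 2)) | a b c. True}"
proof (intro equalityI subsetI)
  fix x assume "x \<in> g ` vecs 3"
  then obtain a b c where "x = g (lin3 a b c (unit_vec 0) (unit_vec 1) (unit_vec 2))"
    unfolding vecs3_eq_span_units by blast
  then show "x \<in> {lin3 a b c (g (unit_vec 0)) (g (unit_vec 1)) (g (unit_vec 2)) | a b c. True}"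
    unfolding assms by blast
next
  fix x assume "x \<in> {lin3 a b c (g (unit_vec 0)) (g (unit_vec 1)) (g (unit_vec 2)) | a b c. True}"
  then obtain a b c where "x = g (lin3 a b c (unit_vec 0) (unit_vec 1) (unit_vec 2))"
    unfolding assms by blast
  moreover have "lin3 a b c (unit_vec 0) (unit_vec 1) (unit_vec 2) \<in> vecs 3"
    unfolding vecs3_eq_span_units by blast
  ultimately show "x \<in> g ` vecs 3"
    by blast
qed

subsection \<open>Binary quadratic forms\<close>

lemma binary_quadratic_three_zeros:
  fixes \<beta> \<mu> \<gamma> :: "'a::field"
  assumes "\<beta>*a1*a1 + \<mu>*a1*a2 + \<gamma>*a2*a2 = 0" "\<beta>*b1*b1 + \<mu>*b1*b2 + \<gamma>*b2*b2 = 0"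
    and "\<beta>*c1*c1 + \<mu>*c1*c2 + \<gamma>*c2*c2 = 0"
    and "a1*b2 - a2*b1 \<noteq> 0" "c1*b2 - c2*b1 \<noteq> 0" "a1*c2 - a2*c1 \<noteq> 0"
  shows "\<beta>*d1*d1 + \<mu>*d1*d2 + \<gamma>*d2*d2 = 0"
proof -
  \<comment> \<open>The form written in the basis (a1, a2), (b1, b2); ?R is the polar form of the two basis vectors.\<close>
  let ?R = "2*\<beta>*a1*b1 + \<mu>*(a1*b2 + a2*b1) + 2*\<gamma>*a2*b2"
  have expand: "(a1*b2 - a2*b1)^2 * (\<beta>*e1*e1 + \<mu>*e1*e2 + \<gamma>*e2*e2) =
      (e1*b2 - e2*b1)^2 * (\<beta>*a1*a1 + \<mu>*a1*a2 + \<gamma>*a2*a2)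
    + (e1*b2 - e2*b1) * (a1*e2 - a2*e1) * ?R
    + (a1*e2 - a2*e1)^2 * (\<beta>*b1*b1 + \<mu>*b1*b2 + \<gamma>*b2*b2)" for e1 e2
    by algebra
  have "(c1*b2 - c2*b1) * (a1*c2 - a2*c1) * ?R = 0"
    using expand[of c1 c2] assms(1-3) by simp
  then have "?R = 0" using assms(5,6) by simp
  then show ?thesis using expand[of d1 d2] assms(1,2,4) by simp
qed

subsection \<open>The plane ruling of a Segre variety\<close>

definition segre_plane :: "(nat \<Rightarrow> nat \<Rightarrow> 'a::field) \<Rightarrow> 'a \<Rightarrow> 'a \<Rightarrow> (nat \<Rightarrow> 'a) set" where
  "segre_plane M x1 x2 = {mat_app M (segre_vec x1 x2 y) | y. y \<in> vecs 3}"

lemma segre_plane_image: "segre_plane M x1 x2 = (\<lambda>y. mat_app M (segre_vec x1 x2 y)) ` vecs 3"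
  by (auto simp: segre_plane_def)

lemma segre_planes_eq: "segre_planes M = {segre_plane M x1 x2 | x1 x2. (x1, x2) \<noteq> (0, 0)}"
  by (simp add: segre_planes_def segre_plane_def)

lemma segre_plane_in_segre_planes: "(x1, x2) \<noteq> (0, 0) \<Longrightarrow> segre_plane M x1 x2 \<in> segre_planes M"
  by (auto simp: segre_planes_eq)

lemma segre_plane_scale:
  assumes "k \<noteq> 0"
  shows "segre_plane M (k * x1) (k * x2) = segre_plane M x1 x2"
proof -
  let ?scale = "\<lambda>y i. k * y i"
  have segre_scale: "segre_vec (k * x1) (k * x2) y = segre_vec x1 x2 (?scale y)" for y
    by (rule ext) (simp add: segre_vec_def)
  have scale_surj: "?scale ` vecs 3 = vecs 3"
  proof
    show "vecs 3 \<subseteq> ?scale ` vecs 3"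
    proof
      fix y :: "nat \<Rightarrow> 'a" assume "y \<in> vecs 3"
      have "y = ?scale (\<lambda>i. y i / k)"
        using assms by simp
      moreover have "(\<lambda>i. y i / k) \<in> vecs 3"
        using \<open>y \<in> vecs 3\<close> by (simp add: vecs_def)
      ultimately show "y \<in> ?scale ` vecs 3" by (rule image_eqI)
    qed
  qed (auto simp: vecs_def)
  have "segre_plane M (k * x1) (k * x2) = (\<lambda>y. mat_app M (segre_vec x1 x2 y)) ` ?scale ` vecs 3"
    unfolding segre_plane_image image_image segre_scale ..
  then show ?thesis
    unfolding scale_surj segre_plane_image .
qed

lemma segre_plane_proportional:
  assumes "(a1, a2) \<noteq> (0, 0)" "(b1, b2) \<noteq> (0, 0)" "a1 * b2 = a2 * b1"
  shows "segre_plane M a1 a2 = segre_plane M b1 b2"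
proof -
  obtain k where "k \<noteq> 0" "a1 = k * b1" "a2 = k * b2"
  proof (cases "b1 = 0")
    case True
    then show ?thesis using assms that[of "a2 / b2"] by auto
  next
    case False
    moreover have "a1 \<noteq> 0" using assms False by auto
    moreover have "a2 = a1 / b1 * b2" using assms False by (simp add: field_simps)
    ultimately show ?thesis using that[of "a1 / b1"] by simp
  qed
  then show ?thesis using segre_plane_scale by simp
qed

lemma symp_segre_plane_quadratic:
  "\<exists>\<beta> \<mu> \<gamma>. \<forall>d1 d2. symp (mat_app M (segre_vec d1 d2 y)) (mat_app M (segre_vec d1 d2 z)) =
      \<beta>*d1*d1 + \<mu>*d1*d2 + \<gamma>*d2*d2"
proof -
  let ?y1 = "mat_app M (segre_vec 1 0 y)" and ?y2 = "mat_app M (segre_vec 0 1 y)"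
  let ?z1 = "mat_app M (segre_vec 1 0 z)" and ?z2 = "mat_app M (segre_vec 0 1 z)"
  have split: "mat_app M (segre_vec d1 d2 x) =
      (\<lambda>i. d1 * mat_app M (segre_vec 1 0 x) i + d2 * mat_app M (segre_vec 0 1 x) i)" for d1 d2 x
    by (subst segre_vec_split) (rule mat_app_lincomb)
  have "symp (mat_app M (segre_vec d1 d2 y)) (mat_app M (segre_vec d1 d2 z)) =
      symp ?y1 ?z1 * d1*d1 + (symp ?y1 ?z2 + symp ?y2 ?z1) * d1*d2 + symp ?y2 ?z2 * d2*d2" for d1 d2
    unfolding split[of d1 d2 y] split[of d1 d2 z] symp_lincomb by (simp add: algebra_simps)
  then show ?thesis by blast
qed

lemma is_plane_segre_plane:
  assumes "nonsingular M" and "(d1, d2) \<noteq> (0, 0)"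
  shows "is_plane (segre_plane M d1 d2)"
  unfolding is_plane_def
proof (intro exI conjI allI impI)
  let ?f = "\<lambda>y. mat_app M (segre_vec d1 d2 y)"
  let ?e = "\<lambda>k. unit_vec k :: nat \<Rightarrow> 'a"
  show "?f (?e 0) \<in> vecs 6" "?f (?e 1) \<in> vecs 6" "?f (?e 2) \<in> vecs 6"
    by (rule mat_app_in_vecs)+
  show "segre_plane M d1 d2 = {lin3 a b c (?f (?e 0)) (?f (?e 1)) (?f (?e 2)) | a b c. True}"
    unfolding segre_plane_image by (rule image_vecs3_eq_span) (simp add: mat_app_lin3 segre_vec_lin3)
  fix a b c
  assume "lin3 a b c (?f (?e 0)) (?f (?e 1)) (?f (?e 2)) = (\<lambda>_. 0)"
  then have "?f (lin3 a b c (?e 0) (?e 1) (?e 2)) = mat_app M (\<lambda>_. 0)"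
    by (simp only: mat_app_lin3 segre_vec_lin3 mat_app_zero)
  moreover have "(\<lambda>_. 0) \<in> vecs 6"
    by (simp add: vecs_def)
  ultimately have "segre_vec d1 d2 (lin3 a b c (?e 0) (?e 1) (?e 2)) = (\<lambda>_. 0)"
    using assms(1) segre_vec_in_vecs unfolding nonsingular_def inj_on_def by blast
  from fun_cong[OF this, of 0] fun_cong[OF this, of 1] fun_cong[OF this, of 2]
    fun_cong[OF this, of 3] fun_cong[OF this, of 4] fun_cong[OF this, of 5]
  have "d1*a = 0" "d1*b = 0" "d1*c = 0" "d2*a = 0" "d2*b = 0" "d2*c = 0"
    by (simp_all add: segre_vec_def lin3_def unit_vec_def)
  then show "a = 0" "b = 0" "c = 0"
    using assms(2) by auto
qed

definition totally_isotropic :: "(nat \<Rightarrow> 'a::comm_ring_1) set \<Rightarrow> bool" where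
  "totally_isotropic P \<longleftrightarrow> (\<forall>x\<in>P. \<forall>y\<in>P. symp x y = 0)"

lemma W5_generator_iff: "W5_generator P \<longleftrightarrow> is_plane P \<and> totally_isotropic P"
  by (simp add: W5_generator_def totally_isotropic_def)

lemma segre_ruling_generators_if_three_isotropic:
  assumes "nonsingular M"
    and "A \<in> segre_planes M" "B \<in> segre_planes M" "C \<in> segre_planes M"
    and "A \<noteq> B" "A \<noteq> C" "B \<noteq> C"
    and "totally_isotropic A" "totally_isotropic B" "totally_isotropic C"
    and "P \<in> segre_planes M"
  shows "W5_generator P"
proof -
  obtain a1 a2 where a: "(a1, a2) \<noteq> (0, 0)" "A = segre_plane M a1 a2"
    using assms(2) by (auto simp: segre_planes_eq)
  obtain b1 b2 where b: "(b1, b2) \<noteq> (0, 0)" "B = segre_plane M b1 b2"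
    using assms(3) by (auto simp: segre_planes_eq)
  obtain c1 c2 where c: "(c1, c2) \<noteq> (0, 0)" "C = segre_plane M c1 c2"
    using assms(4) by (auto simp: segre_planes_eq)
  obtain d1 d2 where d: "(d1, d2) \<noteq> (0, 0)" "P = segre_plane M d1 d2"
    using assms(11) by (auto simp: segre_planes_eq)
  have ab: "a1*b2 - a2*b1 \<noteq> 0"
    using segre_plane_proportional[OF a(1) b(1)] a(2) b(2) assms(5) by auto
  have cb: "c1*b2 - c2*b1 \<noteq> 0"
    using segre_plane_proportional[OF c(1) b(1)] c(2) b(2) assms(7) by auto
  have ac: "a1*c2 - a2*c1 \<noteq> 0"
    using segre_plane_proportional[OF a(1) c(1)] a(2) c(2) assms(6) by auto
  have "symp x y = 0" if xy_in: "x \<in> P" "y \<in> P" for x y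
  proof -
    obtain y' z' where "y' \<in> vecs 3" "z' \<in> vecs 3"
      and xy: "x = mat_app M (segre_vec d1 d2 y')" "y = mat_app M (segre_vec d1 d2 z')"
      using xy_in d(2) by (auto simp: segre_plane_def)
    obtain \<beta> \<mu> \<gamma> where Q: "\<And>e1 e2. symp (mat_app M (segre_vec e1 e2 y')) (mat_app M (segre_vec e1 e2 z')) =
        \<beta>*e1*e1 + \<mu>*e1*e2 + \<gamma>*e2*e2"
      using symp_segre_plane_quadratic by blast
    have vanish: "\<beta>*e1*e1 + \<mu>*e1*e2 + \<gamma>*e2*e2 = 0"
      if "totally_isotropic (segre_plane M e1 e2)" for e1 e2
      using that \<open>y' \<in> vecs 3\<close> \<open>z' \<in> vecs 3\<close> unfolding Q[symmetric] totally_isotropic_def segre_plane_def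
      by blast
    have "\<beta>*d1*d1 + \<mu>*d1*d2 + \<gamma>*d2*d2 = 0"
      using binary_quadratic_three_zeros[OF vanish vanish vanish ab cb ac] a(2) b(2) c(2) assms(8-10)
      by blast
    then show ?thesis
      unfolding xy Q .
  qed
  then show ?thesis
    unfolding W5_generator_iff totally_isotropic_def using is_plane_segre_plane[OF assms(1) d(1)] d(2)
    by blast
qed

subsection \<open>Planes over a finite field\<close>

lemma plane_subset_vecs: "is_plane P \<Longrightarrow> P \<subseteq> vecs 6"
  unfolding is_plane_def using lin3_in_vecs by blast

lemma plane_diff_mem:
  assumes "is_plane P" "x \<in> P" "y \<in> P"
  shows "(\<lambda>i. x i - y i) \<in> P"
proof -
  obtain u v w where P: "P = {lin3 a b c u v w | a b c. True}"
    using assms(1) unfolding is_plane_def by blast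
  then obtain a b c a' b' c' where "x = lin3 a b c u v w" "y = lin3 a' b' c' u v w"
    using assms(2,3) by blast
  then have "(\<lambda>i. x i - y i) = lin3 (a - a') (b - b') (c - c') u v w"
    by (simp add: lin3_diff)
  then show ?thesis
    unfolding P by blast
qed

lemma card_plane:
  fixes P :: "(nat \<Rightarrow> 'a::{finite,field}) set"
  assumes "is_plane P"
  shows "card P = card (UNIV :: 'a set) ^ 3"
proof -
  obtain u v w where indep: "\<And>a b c. lin3 a b c u v w = (\<lambda>_. 0) \<Longrightarrow> a = 0 \<and> b = 0 \<and> c = 0"
    and P: "P = {lin3 a b c u v w | a b c. True}"
    using assms unfolding is_plane_def by blast
  let ?coords = "\<lambda>(a, b, c). lin3 a b c u v w"
  have "P = ?coords ` UNIV"
    unfolding P by (auto simp: image_iff) (metis case_prod_conv)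
  moreover have "inj ?coords"
  proof (rule injI)
    fix p p' :: "'a \<times> 'a \<times> 'a"
    obtain a b c a' b' c' where p: "p = (a, b, c)" "p' = (a', b', c')"
      by (cases p, cases p') auto
    assume "?coords p = ?coords p'"
    then have "(\<lambda>i. lin3 a b c u v w i - lin3 a' b' c' u v w i) = (\<lambda>_. 0)"
      by (simp add: p)
    then have "lin3 (a - a') (b - b') (c - c') u v w = (\<lambda>_. 0)"
      by (simp only: lin3_diff)
    then have "a - a' = 0 \<and> b - b' = 0 \<and> c - c' = 0"
      by (rule indep)
    then show "p = p'"
      by (simp add: p)
  qed
  ultimately show ?thesis
    by (simp add: card_image card_cartesian_product power3_eq_cube flip: UNIV_Times_UNIV)
qed

lemma image_plane_eq:
  fixes P Q :: "(nat \<Rightarrow> 'a::{finite,field}) set"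
  assumes "is_plane P" "is_plane Q" "inj_on f P" "f ` P \<subseteq> Q"
  shows "f ` P = Q"
proof (rule card_subset_eq)
  show "finite Q"
    using card_plane[OF assms(2)] by (intro card_ge_0_finite) (simp add: finite_UNIV_card_ge_0)
  show "card (f ` P) = card Q"
    using assms by (simp add: card_image card_plane)
qed (fact assms(4))

lemma inj_on_plane_if_trivial_kernel:
  fixes f :: "(nat \<Rightarrow> 'a::field) \<Rightarrow> nat \<Rightarrow> 'a"
  assumes "is_plane P"
    and "\<And>x y. f (\<lambda>i. x i - y i) = (\<lambda>i. f x i - f y i)"
    and "\<And>x. x \<in> P \<Longrightarrow> f x = (\<lambda>_. 0) \<Longrightarrow> x = (\<lambda>_. 0)"
  shows "inj_on f P"
proof (rule inj_onI)
  fix x y assume "x \<in> P" "y \<in> P" "f x = f y"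
  then have "f (\<lambda>i. x i - y i) = (\<lambda>_. 0)"
    using assms(2) by simp
  then have "(\<lambda>i. x i - y i) = (\<lambda>_. 0)"
    using assms(3) plane_diff_mem[OF assms(1) \<open>x \<in> P\<close> \<open>y \<in> P\<close>] by blast
  then show "x = y"
    by (simp add: fun_eq_iff)
qed

subsection \<open>A Segre variety through three disjoint planes\<close>

abbreviation span_U456 :: "(nat \<Rightarrow> 'a::zero) set" where
  "span_U456 \<equiv> {v \<in> vecs 6. v 0 = 0 \<and> v 1 = 0 \<and> v 2 = 0}"

abbreviation span_U123 :: "(nat \<Rightarrow> 'a::zero) set" where
  "span_U123 \<equiv> {v \<in> vecs 6. v 3 = 0 \<and> v 4 = 0 \<and> v 5 = 0}"

lemma less_6_cases: "(i::nat) < 6 \<Longrightarrow> i = 0 \<or> i = 1 \<or> i = 2 \<or> i = 3 \<or> i = 4 \<or> i = 5"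
  by auto

lemma is_plane_span_units:
  assumes "distinct [i, j, k]" "i < 6" "j < 6" "k < 6"
  shows "is_plane {lin3 a b c (unit_vec i) (unit_vec j) (unit_vec k) | a b c. True}"
  unfolding is_plane_def
proof (intro exI conjI allI impI)
  show "unit_vec i \<in> vecs 6" "unit_vec j \<in> vecs 6" "unit_vec k \<in> vecs 6"
    using assms by (simp_all add: unit_vec_in_vecs)
  fix a b c :: 'a
  assume "lin3 a b c (unit_vec i) (unit_vec j) (unit_vec k) = (\<lambda>_. 0)"
  from fun_cong[OF this, of i] fun_cong[OF this, of j] fun_cong[OF this, of k]
  show "a = 0" "b = 0" "c = 0"
    using assms(1) by (auto simp: lin3_def unit_vec_def)
qed simp

lemma span_U123_eq:
  "span_U123 = {lin3 a b c (unit_vec 0) (unit_vec 1) (unit_vec 2) | a b c :: 'a::comm_ring_1. True}"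
proof (intro equalityI subsetI)
  fix x :: "nat \<Rightarrow> 'a" assume "x \<in> span_U123"
  then have "x = lin3 (x 0) (x 1) (x 2) (unit_vec 0) (unit_vec 1) (unit_vec 2)"
    by (intro vecs_eq_lin3_units[of _ 6]) (auto dest!: less_6_cases)
  then show "x \<in> {lin3 a b c (unit_vec 0) (unit_vec 1) (unit_vec 2) | a b c. True}"
    by blast
next
  fix x :: "nat \<Rightarrow> 'a" assume "x \<in> {lin3 a b c (unit_vec 0) (unit_vec 1) (unit_vec 2) | a b c. True}"
  then obtain a b c where x: "x = lin3 a b c (unit_vec 0) (unit_vec 1) (unit_vec 2)"
    by blast
  have "x \<in> vecs 6"
    unfolding x by (intro lin3_in_vecs unit_vec_in_vecs) auto
  then show "x \<in> span_U123"
    by (simp add: x lin3_def unit_vec_def)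
qed

lemma span_U456_eq:
  "span_U456 = {lin3 a b c (unit_vec 3) (unit_vec 4) (unit_vec 5) | a b c :: 'a::comm_ring_1. True}"
proof (intro equalityI subsetI)
  fix x :: "nat \<Rightarrow> 'a" assume "x \<in> span_U456"
  then have "x = lin3 (x 3) (x 4) (x 5) (unit_vec 3) (unit_vec 4) (unit_vec 5)"
    by (intro vecs_eq_lin3_units[of _ 6]) (auto dest!: less_6_cases)
  then show "x \<in> {lin3 a b c (unit_vec 3) (unit_vec 4) (unit_vec 5) | a b c. True}"
    by blast
next
  fix x :: "nat \<Rightarrow> 'a" assume "x \<in> {lin3 a b c (unit_vec 3) (unit_vec 4) (unit_vec 5) | a b c. True}"
  then obtain a b c where x: "x = lin3 a b c (unit_vec 3) (unit_vec 4) (unit_vec 5)"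
    by blast
  have "x \<in> vecs 6"
    unfolding x by (intro lin3_in_vecs unit_vec_in_vecs) auto
  then show "x \<in> span_U456"
    by (simp add: x lin3_def unit_vec_def)
qed

lemma totally_isotropic_span_U123: "totally_isotropic span_U123"
  by (simp add: totally_isotropic_def symp_def eval_nat_numeral)

lemma totally_isotropic_span_U456: "totally_isotropic span_U456"
  by (simp add: totally_isotropic_def symp_def eval_nat_numeral)

lemma is_plane_span_U123: "is_plane (span_U123 :: (nat \<Rightarrow> 'a::field) set)"
  unfolding span_U123_eq by (rule is_plane_span_units) auto

lemma is_plane_span_U456: "is_plane (span_U456 :: (nat \<Rightarrow> 'a::field) set)"
  unfolding span_U456_eq by (rule is_plane_span_units) auto

definition upper_half :: "(nat \<Rightarrow> 'a::zero) \<Rightarrow> nat \<Rightarrow> 'a" where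
  "upper_half x = (\<lambda>i. if i < 3 then x i else 0)"

definition lower_half :: "(nat \<Rightarrow> 'a::zero) \<Rightarrow> nat \<Rightarrow> 'a" where
  "lower_half x = (\<lambda>i. if 3 \<le> i \<and> i < 6 then x i else 0)"

definition split_basis_matrix :: "(nat \<Rightarrow> 'a) \<Rightarrow> (nat \<Rightarrow> 'a) \<Rightarrow> (nat \<Rightarrow> 'a) \<Rightarrow> nat \<Rightarrow> nat \<Rightarrow> 'a::zero"
  where "split_basis_matrix u v w i j = (if (i < 3) = (j < 3) then ([u, v, w] ! (j mod 3)) i else 0)"

lemma mat_app_split_basis_matrix:
  "mat_app (split_basis_matrix u v w) x =
     (\<lambda>i. if i < 3 then lin3 (x 0) (x 1) (x 2) u v w i
          else if i < 6 then lin3 (x 3) (x 4) (x 5) u v w i else 0)"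
proof -
  have sum6: "(\<Sum>j<6. f j) = f 0 + f 1 + f 2 + f 3 + f 4 + f (5::nat)" for f :: "nat \<Rightarrow> 'a"
    by (simp add: eval_nat_numeral)
  show ?thesis
    by (rule ext) (simp add: mat_app_def sum6 split_basis_matrix_def lin3_def)
qed

lemma nonsingularI:
  fixes M :: "nat \<Rightarrow> nat \<Rightarrow> 'a::comm_ring_1"
  assumes "\<And>x. x \<in> vecs 6 \<Longrightarrow> mat_app M x = (\<lambda>_. 0) \<Longrightarrow> x = (\<lambda>_. 0)"
  shows "nonsingular M"
  unfolding nonsingular_def
proof (rule inj_onI)
  fix x y assume "x \<in> vecs 6" "y \<in> vecs 6" "mat_app M x = mat_app M y"
  then have "mat_app M (\<lambda>i. x i - y i) = (\<lambda>_. 0)"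
    using mat_app_lincomb[of M 1 x "-1" y] by simp
  moreover have "(\<lambda>i. x i - y i) \<in> vecs 6"
    using \<open>x \<in> vecs 6\<close> \<open>y \<in> vecs 6\<close> by (simp add: vecs_def)
  ultimately have "(\<lambda>i. x i - y i) = (\<lambda>_. 0)"
    using assms by blast
  then show "x = y"
    by (simp add: fun_eq_iff)
qed

lemma nonsingular_split_basis_matrix:
  assumes "\<And>a b c. upper_half (lin3 a b c u v w) = (\<lambda>_. 0) \<Longrightarrow> a = 0 \<and> b = 0 \<and> c = 0"
    and "\<And>a b c. lower_half (lin3 a b c u v w) = (\<lambda>_. 0) \<Longrightarrow> a = 0 \<and> b = 0 \<and> c = 0"
  shows "nonsingular (split_basis_matrix u v w)"
proof (rule nonsingularI)
  fix x assume x: "x \<in> vecs 6" and "mat_app (split_basis_matrix u v w) x = (\<lambda>_. 0)"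
  then have Mx: "mat_app (split_basis_matrix u v w) x i = 0" for i
    by simp
  have "upper_half (lin3 (x 0) (x 1) (x 2) u v w) = (\<lambda>_. 0)"
  proof
    fix i show "upper_half (lin3 (x 0) (x 1) (x 2) u v w) i = 0"
      using Mx[of i] by (auto simp: upper_half_def mat_app_split_basis_matrix)
  qed
  moreover have "lower_half (lin3 (x 3) (x 4) (x 5) u v w) = (\<lambda>_. 0)"
  proof
    fix i show "lower_half (lin3 (x 3) (x 4) (x 5) u v w) i = 0"
      using Mx[of i] by (auto simp: lower_half_def mat_app_split_basis_matrix)
  qed
  ultimately have coords: "x 0 = 0 \<and> x 1 = 0 \<and> x 2 = 0" "x 3 = 0 \<and> x 4 = 0 \<and> x 5 = 0"
    using assms by blast+
  show "x = (\<lambda>_. 0)"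
  proof
    fix i show "x i = 0"
      using x coords by (cases "i < 6") (auto simp: vecs_def dest!: less_6_cases)
  qed
qed

lemma segre_plane_split_basis_matrix:
  assumes "u \<in> vecs 6" "v \<in> vecs 6" "w \<in> vecs 6"
  defines "P \<equiv> {lin3 a b c u v w | a b c. True}"
  shows "segre_plane (split_basis_matrix u v w) 1 1 = P"
    and "segre_plane (split_basis_matrix u v w) 1 0 = upper_half ` P"
    and "segre_plane (split_basis_matrix u v w) 0 1 = lower_half ` P"
proof -
  define g :: "'a \<Rightarrow> 'a \<Rightarrow> (nat \<Rightarrow> 'a) \<Rightarrow> nat \<Rightarrow> 'a" where
    "g x1 x2 z = (\<lambda>i. if i < 3 then x1 * z i else if i < 6 then x2 * z i else 0)" for x1 x2 z
  have image_eq: "mat_app (split_basis_matrix u v w) (segre_vec x1 x2 y) = g x1 x2 (lin3 (y 0) (y 1) (y 2) u v w)"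
    for x1 x2 y
    by (rule ext) (simp add: mat_app_split_basis_matrix segre_vec_def g_def lin3_def algebra_simps)
  have segre_plane_g: "segre_plane (split_basis_matrix u v w) x1 x2 = {g x1 x2 (lin3 a b c u v w) | a b c. True}"
    for x1 x2
    unfolding segre_plane_def image_eq by (rule vecs_coords_eq)
  have "g 1 1 z = z" if "z \<in> vecs 6" for z
    using that by (auto simp: g_def vecs_def)
  then show "segre_plane (split_basis_matrix u v w) 1 1 = P"
    unfolding segre_plane_g P_def using lin3_in_vecs[OF assms(1-3)] by auto
  have "g 1 0 = upper_half" "g 0 1 = lower_half"
    by (auto simp: g_def upper_half_def lower_half_def fun_eq_iff)
  then show "segre_plane (split_basis_matrix u v w) 1 0 = upper_half ` P"
    and "segre_plane (split_basis_matrix u v w) 0 1 = lower_half ` P"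
    unfolding segre_plane_g P_def by auto
qed

lemma segre_variety_through_disjoint_plane:
  fixes P :: "(nat \<Rightarrow> 'a::{finite,field}) set"
  assumes "is_plane P" "disjoint_sub P span_U456" "disjoint_sub P span_U123"
  shows "\<exists>M. nonsingular M \<and> segre_plane M 0 1 = span_U456 \<and> segre_plane M 1 0 = span_U123
           \<and> segre_plane M 1 1 = P"
proof -
  obtain u v w where uvw: "u \<in> vecs 6" "v \<in> vecs 6" "w \<in> vecs 6"
    and indep: "\<And>a b c. lin3 a b c u v w = (\<lambda>_. 0) \<Longrightarrow> a = 0 \<and> b = 0 \<and> c = 0"
    and P: "P = {lin3 a b c u v w | a b c. True}"
    using assms(1) unfolding is_plane_def by blast
  have upper_kernel: "x = (\<lambda>_. 0)" if x: "x \<in> P" and ker: "upper_half x = (\<lambda>_. 0)" for x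
  proof -
    have "x i = 0" if "i < 3" for i
      using fun_cong[OF ker, of i] that by (simp add: upper_half_def)
    then have "x \<in> span_U456"
      using x plane_subset_vecs[OF assms(1)] by auto
    then show ?thesis
      using x assms(2) unfolding disjoint_sub_def by blast
  qed
  have lower_kernel: "x = (\<lambda>_. 0)" if x: "x \<in> P" and ker: "lower_half x = (\<lambda>_. 0)" for x
  proof -
    have "x i = 0" if "3 \<le> i" "i < 6" for i
      using fun_cong[OF ker, of i] that by (simp add: lower_half_def)
    then have "x \<in> span_U123"
      using x plane_subset_vecs[OF assms(1)] by auto
    then show ?thesis
      using x assms(3) unfolding disjoint_sub_def by blast
  qed
  have "upper_half ` P = span_U123"
  proof (rule image_plane_eq[OF assms(1) is_plane_span_U123])
    show "inj_on upper_half P"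
      by (rule inj_on_plane_if_trivial_kernel[OF assms(1) _ upper_kernel]) (auto simp: upper_half_def)
    show "upper_half ` P \<subseteq> span_U123"
      by (auto simp: upper_half_def vecs_def)
  qed
  moreover have "lower_half ` P = span_U456"
  proof (rule image_plane_eq[OF assms(1) is_plane_span_U456])
    show "inj_on lower_half P"
      by (rule inj_on_plane_if_trivial_kernel[OF assms(1) _ lower_kernel]) (auto simp: lower_half_def)
    show "lower_half ` P \<subseteq> span_U456"
      by (auto simp: lower_half_def vecs_def)
  qed
  moreover have "nonsingular (split_basis_matrix u v w)"
    using upper_kernel lower_kernel indep unfolding P by (intro nonsingular_split_basis_matrix) blast+
  ultimately show ?thesis
    using segre_plane_split_basis_matrix[OF uvw] unfolding P by metis
qed

theorem mainTheorem11:
  fixes Pi3 :: "(nat \<Rightarrow> 'a::{finite,field}) set"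
  defines "Pi1 \<equiv> {v \<in> vecs 6. v 0 = 0 \<and> v 1 = 0 \<and> v 2 = 0}"
      and "Pi2 \<equiv> {v \<in> vecs 6. v 3 = 0 \<and> v 4 = 0 \<and> v 5 = 0}"
  assumes "W5_generator Pi3"
      and "disjoint_sub Pi3 Pi1"
      and "disjoint_sub Pi3 Pi2"
  shows "(\<exists>M. nonsingular M \<and> Pi1 \<in> segre_planes M \<and> Pi2 \<in> segre_planes M
                \<and> Pi3 \<in> segre_planes M)
       \<and> (\<forall>M. nonsingular M \<and> Pi1 \<in> segre_planes M \<and> Pi2 \<in> segre_planes M
                \<and> Pi3 \<in> segre_planes M \<longrightarrow> (\<forall>P \<in> segre_planes M. W5_generator P))"
proof -
  have Pi3: "is_plane Pi3" "totally_isotropic Pi3"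
    using assms(3) by (simp_all add: W5_generator_iff)
  have "unit_vec 3 \<in> Pi1 - Pi2" "unit_vec 0 \<in> Pi2" "unit_vec 3 \<noteq> (\<lambda>_. 0)" "unit_vec 0 \<noteq> (\<lambda>_. 0)"
    unfolding Pi1_def Pi2_def by (auto simp: unit_vec_def vecs_def fun_eq_iff)
  then have distinct: "Pi1 \<noteq> Pi2" "Pi1 \<noteq> Pi3" "Pi2 \<noteq> Pi3"
    using assms(4,5) by (auto simp: disjoint_sub_def)
  obtain M where "nonsingular M" "segre_plane M 0 1 = Pi1" "segre_plane M 1 0 = Pi2"
    "segre_plane M 1 1 = Pi3"
    using segre_variety_through_disjoint_plane[OF Pi3(1)] assms(4,5) unfolding Pi1_def Pi2_def
    by blast
  then have "\<exists>M. nonsingular M \<and> Pi1 \<in> segre_planes M \<and> Pi2 \<in> segre_planes M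
                \<and> Pi3 \<in> segre_planes M"
    using segre_plane_in_segre_planes[of _ _ M] by (metis one_neq_zero prod.inject)
  moreover have "W5_generator P"
    if "nonsingular M" "Pi1 \<in> segre_planes M" "Pi2 \<in> segre_planes M" "Pi3 \<in> segre_planes M"
      and "P \<in> segre_planes M" for M P
    using segre_ruling_generators_if_three_isotropic[OF that(1-4) distinct _ _ Pi3(2) that(5)]
      totally_isotropic_span_U456 totally_isotropic_span_U123 unfolding Pi1_def Pi2_def
    by blast
  ultimately show ?thesis
    by blast
qed

end
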